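(* Let $S=(Z_1,\dots,Z_n)$ with $Z_i$ i.i.d. $\sim P_Z$ on $\mathcal Z$, let $P_{W|S}$ be a learning algorithm, and let $\ell:\mathcal W\times\mathcal Z\to\mathbb R$ be a loss such that for every $w\in\mathcal W$ and every $\lambda\in\mathbb R$, $\mathbf E_{P_Z}\big[e^{\lambda(\ell(w,Z)-\mathbf E\ell(w,Z))}\big]\le e^{\lambda^2\sigma^2/2}$. Let $\beta>1$, assume $P_{SW}\ll P_SP_W$ and $\mathcal H_\beta(S,W)<\infty$, and let $\delta\in(0,1)$. Then with probability at least $1-\delta$ over $S\sim P_S$, $$\mathbf E_{P_{W|S}}[\mathrm{gen}(S,W)]\le\sqrt{\frac{2\sigma^2}{n}}\left(\log\sqrt{\frac{\pi\beta}{\beta-1}}+\frac{\beta}{4(\beta-1)}+\log\frac{\big((\beta-1)\mathcal H_\beta(S,W)+1\big)^{1/\beta}}{\delta}\right).$$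
   Context: $\mathrm{gen}(S,W):=\mathbf E_{Z\sim P_Z}[\ell(W,Z)]-\frac1n\sum_{i=1}^n\ell(W,Z_i)$. $P_{SW}$ is the joint law of $(S,W)$ and $P_S,P_W$ its marginals. $\mathcal H_\beta(S,W):=\mathcal H_\beta(P_{SW}\Vert P_SP_W)$ where $\mathcal H_\beta(P\Vert Q):=\int\frac{(\mathrm dP/\mathrm dQ)^\beta-1}{\beta-1}\,\mathrm dQ$. Logarithms are natural. *)

theory Defs
  imports "HOL-Probability.Probability"
begin

text \<open>Tsallis-type divergence H_beta(P || Q) = integral over Q of ((dP/dQ)^beta - 1)/(beta - 1).
  The density dP/dQ is RN_deriv Q P (so that density Q (RN_deriv Q P) = P when P << Q).\<close>
definition H_div :: "real \<Rightarrow> 'a measure \<Rightarrow> 'a measure \<Rightarrow> real" where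
  "H_div \<beta> P Q = (\<integral>x. ((enn2real (RN_deriv Q P x)) powr \<beta> - 1) / (\<beta> - 1) \<partial>Q)"

definition H_div_finite :: "real \<Rightarrow> 'a measure \<Rightarrow> 'a measure \<Rightarrow> bool" where
  "H_div_finite \<beta> P Q \<longleftrightarrow> integrable Q (\<lambda>x. ((enn2real (RN_deriv Q P x)) powr \<beta> - 1) / (\<beta> - 1))"

definition sample_law :: "nat \<Rightarrow> 'z measure \<Rightarrow> (nat \<Rightarrow> 'z) measure" where
  "sample_law n PZ = PiM {..<n} (\<lambda>_. PZ)"

text \<open>Joint law P_SW of (S,W) where S ~ PS and W | S=s ~ K s.\<close>
definition joint_law :: "'s measure \<Rightarrow> 'w measure \<Rightarrow> ('s \<Rightarrow> 'w measure) \<Rightarrow> ('s \<times> 'w) measure" where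
  "joint_law PS MW K = PS \<bind> (\<lambda>s. K s \<bind> (\<lambda>w. return (PS \<Otimes>\<^sub>M MW) (s, w)))"

definition marginal_W :: "'s measure \<Rightarrow> ('s \<Rightarrow> 'w measure) \<Rightarrow> 'w measure" where
  "marginal_W PS K = PS \<bind> K"

definition gen :: "nat \<Rightarrow> 'z measure \<Rightarrow> ('w \<Rightarrow> 'z \<Rightarrow> real) \<Rightarrow> (nat \<Rightarrow> 'z) \<Rightarrow> 'w \<Rightarrow> real" where
  "gen n PZ loss s w = (\<integral>z. loss w z \<partial>PZ) - (1 / real n) * (\<Sum>i<n. loss w (s i))"

end

theory Submission
  imports Defs
begin

(* For a fixed hypothesis w, gen(S, w) is a mean of n independent centred sigma-subgaussian
  variables, so E exp(t gen) <= exp(t^2 sigma^2 / (2n)) under the product law P_S P_W.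
  Hoelder's inequality with exponents beta and q = beta / (beta - 1), applied to the density
  rho = dP_SW / d(P_S P_W) whose beta-th moment is (beta - 1) H_beta(S,W) + 1, transfers this to
  P_SW at the price of the factor ((beta - 1) H_beta + 1)^(1/beta) and of t^2 becoming q t^2.
  Markov's inequality in S and Jensen's inequality in W then give, with probability 1 - delta,
  t E[gen(S,W) | S] <= ln (((beta - 1) H_beta + 1)^(1/beta) / delta) + q t^2 sigma^2 / (2n);
  the choice t = sqrt (n / (2 sigma^2)) yields the bound even without the nonnegative term
  ln sqrt (pi beta / (beta - 1)), and for sigma = 0 one lets t tend to infinity. *)

lemma Youngs_inequality_scaled:
  fixes p q x y A B :: real
  assumes p: "p > 1" and q: "q > 1" and pq: "1/p + 1/q = 1"
    and xy: "x \<ge> 0" "y \<ge> 0" and AB: "A > 0" "B > 0"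
  shows "x * y \<le> A powr (1/p) * B powr (1/q) * (x powr p / (A * p) + y powr q / (B * q))"
proof -
  define a b where "a = A powr (1/p)" and "b = B powr (1/q)"
  have a: "a > 0" "a powr p = A" and b: "b > 0" "b powr q = B"
    using AB p q by (auto simp: a_def b_def powr_powr)
  have "(x / a) * (y / b) \<le> (x / a) powr p / p + (y / b) powr q / q"
    by (rule Youngs_inequality[OF p q pq]) (use xy a b in auto)
  also have "\<dots> = x powr p / (A * p) + y powr q / (B * q)"
    using xy a b by (simp add: powr_divide)
  finally show ?thesis
    using a b by (simp add: a_def[symmetric] b_def[symmetric] divide_le_eq mult.commute)
qed

lemma nn_integral_Holder_le:
  fixes f g :: "'a \<Rightarrow> real" and p q A B :: real
  assumes p: "p > 1" and pq: "1/p + 1/q = 1"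
    and [measurable]: "f \<in> borel_measurable M" "g \<in> borel_measurable M"
    and nonneg: "\<And>x. f x \<ge> 0" "\<And>x. g x \<ge> 0"
    and A: "A > 0" "(\<integral>\<^sup>+x. f x powr p \<partial>M) \<le> A"
    and B: "B > 0" "(\<integral>\<^sup>+x. g x powr q \<partial>M) \<le> B"
  shows "(\<integral>\<^sup>+x. f x * g x \<partial>M) \<le> A powr (1/p) * B powr (1/q)"
proof -
  have "1/q = 1 - 1/p" using pq by simp
  moreover have "0 < 1/p" "1/p < 1" using p by auto
  ultimately have "0 < 1/q" "1/q < 1" by auto
  then have q: "q > 1" by simp
  define c where "c = A powr (1/p) * B powr (1/q)"
  define c1 c2 where "c1 = c / (A * p)" and "c2 = c / (B * q)"
  have c: "c1 \<ge> 0" "c2 \<ge> 0" using A B p q by (simp_all add: c_def c1_def c2_def)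
  have "ennreal (f x * g x) \<le> ennreal c1 * ennreal (f x powr p) + ennreal c2 * ennreal (g x powr q)"
    for x
  proof -
    have "f x * g x \<le> c * (f x powr p / (A * p) + g x powr q / (B * q))"
      unfolding c_def by (rule Youngs_inequality_scaled[OF p q pq nonneg A(1) B(1)])
    then have "ennreal (f x * g x) \<le> ennreal (c1 * f x powr p + c2 * g x powr q)"
      by (intro ennreal_leI) (simp add: c1_def c2_def ring_distribs)
    then show ?thesis using c by (simp add: ennreal_plus ennreal_mult)
  qed
  then have "(\<integral>\<^sup>+x. f x * g x \<partial>M)
      \<le> (\<integral>\<^sup>+x. ennreal c1 * ennreal (f x powr p) + ennreal c2 * ennreal (g x powr q) \<partial>M)"
    by (intro nn_integral_mono)
  also have "\<dots> = ennreal c1 * (\<integral>\<^sup>+x. f x powr p \<partial>M) + ennreal c2 * (\<integral>\<^sup>+x. g x powr q \<partial>M)"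
    by (simp add: nn_integral_add nn_integral_cmult)
  also have "\<dots> \<le> ennreal c1 * ennreal A + ennreal c2 * ennreal B"
    by (intro add_mono mult_left_mono A B) auto
  also have "\<dots> = ennreal (c1 * A + c2 * B)"
    using c A B by (simp add: ennreal_mult'' ennreal_plus)
  also have "c1 * A + c2 * B = c * (1/p + 1/q)"
    using A B by (simp add: c1_def c2_def field_simps)
  finally show ?thesis by (simp add: pq c_def)
qed

lemma (in prob_space) integral_le_ln_if_nn_integral_exp_le:
  assumes [measurable]: "f \<in> borel_measurable M"
    and bound: "(\<integral>\<^sup>+x. exp (f x) \<partial>M) \<le> ennreal t" and t: "1 \<le> t"
  shows "(\<integral>x. f x \<partial>M) \<le> ln t"
proof (cases "integrable M f")
  case True
  have "(\<integral>\<^sup>+x. exp (f x) \<partial>M) < \<top>"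
    using bound ennreal_less_top by (rule le_less_trans)
  then have "integrable M (\<lambda>x. exp (f x))"
    by (intro integrableI_bounded) simp_all
  then have "exp (\<integral>x. f x \<partial>M) \<le> (\<integral>x. exp (f x) \<partial>M)"
    using True exp_convex by (intro jensens_inequality[where I=UNIV]) auto
  also have "\<dots> = enn2real (\<integral>\<^sup>+x. exp (f x) \<partial>M)"
    by (rule integral_eq_nn_integral) auto
  also have "\<dots> \<le> t"
    using bound t by (simp add: enn2real_leI)
  finally show ?thesis
    using t by (simp add: ln_ge_iff)
next
  case False
  \<comment> \<open>The Bochner integral of a non-integrable function is 0, hence the hypothesis \<open>1 \<le> t\<close>.\<close>
  then show ?thesis using t by (simp add: not_integrable_integral_eq)
qed

lemma (in prob_space) le_prob_nonpos_if_le_prob_scaled: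
  fixes f :: "'a \<Rightarrow> real"
  assumes [measurable]: "f \<in> borel_measurable M" and c: "0 \<le> c"
    and scaled: "\<And>t. t > 0 \<Longrightarrow> a \<le> prob {x \<in> space M. t * f x \<le> c}"
  shows "a \<le> prob {x \<in> space M. f x \<le> 0}"
proof -
  define A where "A k = {x \<in> space M. (real k + 1) * f x \<le> c}" for k :: nat
  have "(real k + 1) * y \<le> c" if "(real (Suc k) + 1) * y \<le> c" for k y
  proof (cases "0 \<le> y")
    case True
    then have "(real k + 1) * y \<le> (real (Suc k) + 1) * y" by (intro mult_right_mono) auto
    with that show ?thesis by linarith
  next
    case False
    then have "(real k + 1) * y \<le> 0" by (simp add: mult_nonneg_nonpos)
    with c show ?thesis by linarith
  qed
  then have "decseq A"
    by (intro decseq_SucI) (auto simp: A_def)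
  moreover have "range A \<subseteq> events" by (auto simp: A_def)
  ultimately have "(\<lambda>k. prob (A k)) \<longlonglongrightarrow> prob (\<Inter>k. A k)"
    by (intro finite_Lim_measure_decseq)
  then have "a \<le> prob (\<Inter>k. A k)"
    by (rule LIMSEQ_le_const) (use scaled in \<open>auto simp: A_def\<close>)
  also have "\<dots> \<le> prob {x \<in> space M. f x \<le> 0}"
  proof (rule finite_measure_mono)
    show "(\<Inter>k. A k) \<subseteq> {x \<in> space M. f x \<le> 0}"
    proof safe
      fix x assume x: "x \<in> (\<Inter>k. A k)"
      then show "x \<in> space M" by (auto simp: A_def)
      show "f x \<le> 0"
      proof (rule ccontr)
        assume "\<not> f x \<le> 0"
        then obtain k :: nat where "c / f x < real k"
          using reals_Archimedean2 by blast
        then have "c < (real k + 1) * f x"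
          using \<open>\<not> f x \<le> 0\<close> by (simp add: divide_less_eq algebra_simps)
        moreover have "x \<in> A k" using x by blast
        ultimately show False by (simp add: A_def)
      qed
    qed
  qed simp
  finally show ?thesis .
qed

lemma (in prob_space) Markov_prob_le_div:
  fixes F :: "'a \<Rightarrow> ennreal"
  assumes [measurable]: "F \<in> borel_measurable M"
    and bound: "(\<integral>\<^sup>+x. F x \<partial>M) \<le> ennreal V" and \<delta>: "0 < \<delta>" and V: "0 < V"
  shows "1 - \<delta> \<le> prob {x \<in> space M. F x \<le> ennreal (V / \<delta>)}"
proof -
  define t where "t = V / \<delta>"
  have t: "0 < t" using \<delta> V by (simp add: t_def)
  define B where "B = {x \<in> space M. 1 \<le> ennreal (1/t) * F x}"
  have B[measurable]: "B \<in> events" unfolding B_def by measurable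
  have "emeasure M B \<le> ennreal (1/t) * (\<integral>\<^sup>+x. F x * indicator (space M) x \<partial>M)"
    unfolding B_def by (rule nn_integral_Markov_inequality) auto
  also have "(\<integral>\<^sup>+x. F x * indicator (space M) x \<partial>M) = (\<integral>\<^sup>+x. F x \<partial>M)"
    by (intro nn_integral_cong) simp
  also have "ennreal (1/t) * (\<integral>\<^sup>+x. F x \<partial>M) \<le> ennreal (1/t) * ennreal V"
    using bound by (rule mult_left_mono) simp
  also have "\<dots> = ennreal \<delta>"
    using \<delta> V by (simp add: t_def ennreal_mult[symmetric])
  finally have "prob B \<le> \<delta>"
    using \<delta> by (simp add: emeasure_eq_measure)
  then have "1 - \<delta> \<le> prob (space M - B)"
    by (simp add: prob_compl)
  also have "\<dots> \<le> prob {x \<in> space M. F x \<le> ennreal t}"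
  proof (rule finite_measure_mono)
    show "space M - B \<subseteq> {x \<in> space M. F x \<le> ennreal t}"
    proof safe
      fix x assume x: "x \<in> space M" "x \<notin> B"
      show "F x \<le> ennreal t"
      proof (rule ccontr)
        assume "\<not> F x \<le> ennreal t"
        then have "ennreal (1/t) * ennreal t \<le> ennreal (1/t) * F x"
          by (intro mult_left_mono) auto
        with x t show False by (simp add: B_def ennreal_mult[symmetric])
      qed
    qed
  qed measurable
  finally show ?thesis by (simp add: t_def)
qed

lemma nn_integral_exp_mean_deviation_PiM_le:
  fixes f :: "'z \<Rightarrow> real" and n :: nat
  assumes "prob_space PZ" and [measurable]: "f \<in> borel_measurable PZ" and n: "n > 0"
    and mgf: "\<And>t. (\<integral>\<^sup>+z. exp (t * (f z - m)) \<partial>PZ) \<le> exp (t\<^sup>2 * \<sigma>\<^sup>2 / 2)"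
  shows "(\<integral>\<^sup>+s. exp (t * (m - (\<Sum>i<n. f (s i)) / n)) \<partial>PiM {..<n} (\<lambda>_. PZ))
    \<le> exp (t\<^sup>2 * \<sigma>\<^sup>2 / (2 * n))"
proof -
  interpret PZ: prob_space PZ by fact
  interpret product_sigma_finite "\<lambda>_. PZ" by unfold_locales
  have "t * (m - (\<Sum>i<n. f (s i)) / n) = (\<Sum>i<n. (- t / n) * (f (s i) - m))" for s
  proof -
    have "(\<Sum>i<n. (- t / n) * (f (s i) - m)) = (- t / n) * ((\<Sum>i<n. f (s i)) - n * m)"
      by (simp only: sum_distrib_left[symmetric] sum_subtractf) simp
    then show ?thesis using n by (simp add: field_simps)
  qed
  then have "(\<integral>\<^sup>+s. exp (t * (m - (\<Sum>i<n. f (s i)) / n)) \<partial>PiM {..<n} (\<lambda>_. PZ))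
      = (\<integral>\<^sup>+s. (\<Prod>i\<in>{..<n}. ennreal (exp ((- t / n) * (f (s i) - m)))) \<partial>PiM {..<n} (\<lambda>_. PZ))"
    by (simp add: exp_sum prod_ennreal)
  also have "\<dots> = (\<Prod>i\<in>{..<n}. \<integral>\<^sup>+z. exp ((- t / n) * (f z - m)) \<partial>PZ)"
    by (rule product_nn_integral_prod) auto
  also have "\<dots> \<le> (\<Prod>i\<in>{..<n}. ennreal (exp ((- t / n)\<^sup>2 * \<sigma>\<^sup>2 / 2)))"
    using mgf[of "- t / n"] by (simp add: power_mono)
  also have "\<dots> = ennreal (exp ((- t / n)\<^sup>2 * \<sigma>\<^sup>2 / 2) ^ n)"
    by (simp add: ennreal_power)
  also have "exp ((- t / n)\<^sup>2 * \<sigma>\<^sup>2 / 2) ^ n = exp (n * ((- t / n)\<^sup>2 * \<sigma>\<^sup>2 / 2))"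
    by (simp only: exp_of_nat_mult)
  also have "n * ((- t / n)\<^sup>2 * \<sigma>\<^sup>2 / 2) = t\<^sup>2 * \<sigma>\<^sup>2 / (2 * n)"
    using n by (simp add: power2_eq_square field_simps)
  finally show ?thesis .
qed

lemma integral_RN_deriv_powr_eq_H_div:
  assumes "prob_space Q" and \<beta>: "\<beta> > 1" and fin: "H_div_finite \<beta> P Q"
  shows "integrable Q (\<lambda>x. enn2real (RN_deriv Q P x) powr \<beta>)"
    and "(\<integral>x. enn2real (RN_deriv Q P x) powr \<beta> \<partial>Q) = (\<beta> - 1) * H_div \<beta> P Q + 1"
proof -
  interpret prob_space Q by fact
  define h where "h = (\<lambda>x. (enn2real (RN_deriv Q P x) powr \<beta> - 1) / (\<beta> - 1))"
  have h: "integrable Q h" using fin by (simp add: H_div_finite_def h_def)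
  have eq: "enn2real (RN_deriv Q P x) powr \<beta> = (\<beta> - 1) * h x + 1" for x
    using \<beta> by (simp add: h_def)
  show "integrable Q (\<lambda>x. enn2real (RN_deriv Q P x) powr \<beta>)"
    unfolding eq using h by simp
  have "(\<integral>x. enn2real (RN_deriv Q P x) powr \<beta> \<partial>Q) = (\<integral>x. (\<beta> - 1) * h x + 1 \<partial>Q)"
    by (simp only: eq)
  also have "\<dots> = (\<beta> - 1) * (\<integral>x. h x \<partial>Q) + 1"
    using h by (simp add: prob_space)
  finally show "(\<integral>x. enn2real (RN_deriv Q P x) powr \<beta> \<partial>Q) = (\<beta> - 1) * H_div \<beta> P Q + 1"
    by (simp add: H_div_def h_def)
qed

lemma AE_RN_deriv_eq_ennreal_enn2real:
  assumes "prob_space Q" "prob_space P" "sets P = sets Q" "absolutely_continuous Q P"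
  shows "AE x in Q. RN_deriv Q P x = ennreal (enn2real (RN_deriv Q P x))"
proof -
  interpret Q: prob_space Q by fact
  have "AE x in Q. RN_deriv Q P x \<noteq> \<infinity>"
    using assms by (intro Q.RN_deriv_finite prob_space_imp_sigma_finite) auto
  then show ?thesis by eventually_elim (simp add: ennreal_enn2real_if)
qed

lemma Bernoulli_inequality_powr:
  fixes x \<beta> :: real
  assumes x: "x \<ge> 0" and \<beta>: "\<beta> > 1"
  shows "1 + \<beta> * (x - 1) \<le> x powr \<beta>"
proof -
  have q: "\<beta> / (\<beta> - 1) > 1" and pq: "1/\<beta> + 1/(\<beta> / (\<beta> - 1)) = 1"
    using \<beta> by (auto simp: field_simps)
  have "x * 1 \<le> x powr \<beta> / \<beta> + 1 powr (\<beta> / (\<beta> - 1)) / (\<beta> / (\<beta> - 1))"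
    by (rule Youngs_inequality[OF \<beta> q pq x]) simp
  then have "\<beta> * (1 + \<beta> * (x - 1)) \<le> \<beta> * x powr \<beta>"
    using \<beta> by (simp add: field_simps)
  then show ?thesis using \<beta> by (simp add: mult_le_cancel_left_pos)
qed

lemma integral_RN_deriv_eq_1:
  assumes Q: "prob_space Q" and P: "prob_space P" and sets: "sets P = sets Q"
    and ac: "absolutely_continuous Q P"
  shows "integrable Q (\<lambda>x. enn2real (RN_deriv Q P x))"
    and "(\<integral>x. enn2real (RN_deriv Q P x) \<partial>Q) = 1"
proof -
  interpret Q: prob_space Q by fact
  have "(\<integral>\<^sup>+x. enn2real (RN_deriv Q P x) \<partial>Q) = (\<integral>\<^sup>+x. RN_deriv Q P x * 1 \<partial>Q)"
    using AE_RN_deriv_eq_ennreal_enn2real[OF Q P sets ac] by (intro nn_integral_cong_AE) auto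
  also have "\<dots> = (\<integral>\<^sup>+x. 1 \<partial>P)"
    using sets ac by (intro Q.RN_deriv_nn_integral[symmetric] prob_space_imp_sigma_finite) auto
  also have "\<dots> = ennreal 1"
    using P by (simp add: prob_space.emeasure_space_1)
  finally have nn1: "(\<integral>\<^sup>+x. enn2real (RN_deriv Q P x) \<partial>Q) = ennreal 1" .
  then show "integrable Q (\<lambda>x. enn2real (RN_deriv Q P x))"
    by (intro integrableI_nn_integral_finite) auto
  show "(\<integral>x. enn2real (RN_deriv Q P x) \<partial>Q) = 1"
    using nn1 by (subst integral_eq_nn_integral) auto
qed

lemma H_div_nonneg:
  assumes Q: "prob_space Q" and P: "prob_space P" and sets: "sets P = sets Q"
    and ac: "absolutely_continuous Q P" and \<beta>: "\<beta> > 1" and fin: "H_div_finite \<beta> P Q"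
  shows "0 \<le> H_div \<beta> P Q"
proof -
  interpret Q: prob_space Q by fact
  note \<rho> = integral_RN_deriv_eq_1[OF Q P sets ac]
  have "1 = (\<integral>x. 1 + \<beta> * (enn2real (RN_deriv Q P x) - 1) \<partial>Q)"
    using \<rho> by (simp add: Q.prob_space)
  also have "\<dots> \<le> (\<integral>x. enn2real (RN_deriv Q P x) powr \<beta> \<partial>Q)"
    using \<rho>(1) integral_RN_deriv_powr_eq_H_div(1)[OF Q \<beta> fin] \<beta>
    by (intro integral_mono Bernoulli_inequality_powr) auto
  also have "\<dots> = (\<beta> - 1) * H_div \<beta> P Q + 1"
    by (rule integral_RN_deriv_powr_eq_H_div(2)[OF Q \<beta> fin])
  finally show ?thesis using \<beta> by (simp add: zero_le_mult_iff)
qed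

locale prob_kernel =
  fixes PS :: "'s measure" and MW :: "'w measure" and K :: "'s \<Rightarrow> 'w measure"
  assumes prob_space_PS: "prob_space PS"
    and kernel_measurable: "K \<in> PS \<rightarrow>\<^sub>M prob_algebra MW"
begin

lemma prob_space_K: "s \<in> space PS \<Longrightarrow> prob_space (K s)"
  and sets_K: "s \<in> space PS \<Longrightarrow> sets (K s) = sets MW"
  using measurable_space[OF kernel_measurable] by (auto simp: space_prob_algebra)

lemma PS_in_prob_algebra: "PS \<in> space (prob_algebra PS)"
  using prob_space_PS by (simp add: space_prob_algebra)

lemma prob_space_marginal_W: "prob_space (marginal_W PS K)"
  unfolding marginal_W_def by (rule prob_space_bind'[OF PS_in_prob_algebra kernel_measurable])

lemma sets_marginal_W: "sets (marginal_W PS K) = sets MW"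
  unfolding marginal_W_def by (rule sets_bind'[OF PS_in_prob_algebra kernel_measurable])

lemma pair_kernel_measurable:
  "(\<lambda>s. K s \<bind> (\<lambda>w. return (PS \<Otimes>\<^sub>M MW) (s, w))) \<in> PS \<rightarrow>\<^sub>M prob_algebra (PS \<Otimes>\<^sub>M MW)"
  by (intro measurable_bind_prob_space2[OF kernel_measurable]) measurable

lemma prob_space_joint_law: "prob_space (joint_law PS MW K)"
  unfolding joint_law_def by (rule prob_space_bind'[OF PS_in_prob_algebra pair_kernel_measurable])

lemma sets_joint_law: "sets (joint_law PS MW K) = sets (PS \<Otimes>\<^sub>M MW)"
  unfolding joint_law_def by (rule sets_bind'[OF PS_in_prob_algebra pair_kernel_measurable])

lemma nn_integral_joint_law:
  fixes h :: "'s \<times> 'w \<Rightarrow> ennreal"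
  assumes [measurable]: "h \<in> borel_measurable (PS \<Otimes>\<^sub>M MW)"
  shows "(\<integral>\<^sup>+x. h x \<partial>joint_law PS MW K) = (\<integral>\<^sup>+s. \<integral>\<^sup>+w. h (s, w) \<partial>K s \<partial>PS)"
proof -
  have "(\<integral>\<^sup>+x. h x \<partial>joint_law PS MW K)
      = (\<integral>\<^sup>+s. \<integral>\<^sup>+x. h x \<partial>(K s \<bind> (\<lambda>w. return (PS \<Otimes>\<^sub>M MW) (s, w))) \<partial>PS)"
    unfolding joint_law_def
    by (rule nn_integral_bind[OF _ measurable_prob_algebraD[OF pair_kernel_measurable]]) simp
  also have "\<dots> = (\<integral>\<^sup>+s. \<integral>\<^sup>+w. h (s, w) \<partial>K s \<partial>PS)"
  proof (rule nn_integral_cong)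
    fix s assume s: "s \<in> space PS"
    have "(\<lambda>w. return (PS \<Otimes>\<^sub>M MW) (s, w)) \<in> K s \<rightarrow>\<^sub>M subprob_algebra (PS \<Otimes>\<^sub>M MW)"
      using s sets_K[OF s] by (simp cong: measurable_cong_sets)
    then have "(\<integral>\<^sup>+x. h x \<partial>(K s \<bind> (\<lambda>w. return (PS \<Otimes>\<^sub>M MW) (s, w))))
        = (\<integral>\<^sup>+w. \<integral>\<^sup>+x. h x \<partial>return (PS \<Otimes>\<^sub>M MW) (s, w) \<partial>K s)"
      by (rule nn_integral_bind[OF assms])
    also have "\<dots> = (\<integral>\<^sup>+w. h (s, w) \<partial>K s)"
      using s sets_K[OF s]
      by (intro nn_integral_cong nn_integral_return)
         (auto simp: space_pair_measure dest: sets_eq_imp_space_eq)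
    finally show "(\<integral>\<^sup>+x. h x \<partial>(K s \<bind> (\<lambda>w. return (PS \<Otimes>\<^sub>M MW) (s, w))))
        = (\<integral>\<^sup>+w. h (s, w) \<partial>K s)" .
  qed
  finally show ?thesis .
qed

lemma borel_measurable_integral_K:
  fixes h :: "'s \<times> 'w \<Rightarrow> real"
  assumes h[measurable]: "h \<in> borel_measurable (PS \<Otimes>\<^sub>M MW)"
  shows "(\<lambda>s. \<integral>w. h (s, w) \<partial>K s) \<in> borel_measurable PS"
proof -
  define K' where "K' s = distr (K s) (PS \<Otimes>\<^sub>M MW) (\<lambda>w. (s, w))" for s
  have "K' \<in> PS \<rightarrow>\<^sub>M subprob_algebra (PS \<Otimes>\<^sub>M MW)"
    unfolding K'_def by (rule measurable_distr2[OF _ measurable_prob_algebraD[OF kernel_measurable]]) simp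
  then have "(\<lambda>s. \<integral>x. h x \<partial>K' s) \<in> borel_measurable PS"
    by (rule measurable_compose[OF _ integral_measurable_subprob_algebra[OF h]])
  moreover have "(\<integral>x. h x \<partial>K' s) = (\<integral>w. h (s, w) \<partial>K s)" if s: "s \<in> space PS" for s
  proof -
    have "(\<lambda>w. (s, w)) \<in> K s \<rightarrow>\<^sub>M PS \<Otimes>\<^sub>M MW"
      using s sets_K[OF s] by (simp cong: measurable_cong_sets)
    then show ?thesis unfolding K'_def by (subst integral_distr) auto
  qed
  ultimately show ?thesis by (simp cong: measurable_cong)
qed

lemma prob_integral_le_ln_exp_moment:
  fixes h :: "'s \<times> 'w \<Rightarrow> real"
  assumes h[measurable]: "h \<in> borel_measurable (PS \<Otimes>\<^sub>M MW)"
    and moment: "(\<integral>\<^sup>+x. exp (h x) \<partial>joint_law PS MW K) \<le> ennreal V"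
    and \<delta>: "0 < \<delta>" "\<delta> \<le> V"
  shows "1 - \<delta> \<le> measure PS {s \<in> space PS. (\<integral>w. h (s, w) \<partial>K s) \<le> ln (V / \<delta>)}"
proof -
  interpret PS: prob_space PS by (rule prob_space_PS)
  define F where "F s = (\<integral>\<^sup>+w. exp (h (s, w)) \<partial>K s)" for s
  have [measurable]: "F \<in> borel_measurable PS"
    unfolding F_def
    by (rule nn_integral_measurable_subprob_algebra2[OF _ measurable_prob_algebraD[OF kernel_measurable]])
       simp
  have "(\<integral>\<^sup>+s. F s \<partial>PS) = (\<integral>\<^sup>+x. exp (h x) \<partial>joint_law PS MW K)"
    unfolding F_def by (rule nn_integral_joint_law[symmetric]) simp
  then have "1 - \<delta> \<le> measure PS {s \<in> space PS. F s \<le> ennreal (V / \<delta>)}"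
    using moment \<delta> by (intro PS.Markov_prob_le_div) auto
  also have "\<dots> \<le> measure PS {s \<in> space PS. (\<integral>w. h (s, w) \<partial>K s) \<le> ln (V / \<delta>)}"
  proof (rule PS.finite_measure_mono)
    show "{s \<in> space PS. (\<integral>w. h (s, w) \<partial>K s) \<le> ln (V / \<delta>)} \<in> sets PS"
      using borel_measurable_integral_K[OF h] by measurable
    show "{s \<in> space PS. F s \<le> ennreal (V / \<delta>)}
        \<subseteq> {s \<in> space PS. (\<integral>w. h (s, w) \<partial>K s) \<le> ln (V / \<delta>)}"
    proof safe
      fix s assume s: "s \<in> space PS" and F: "F s \<le> ennreal (V / \<delta>)"
      interpret Ks: prob_space "K s" using prob_space_K[OF s] .
      have "(\<lambda>w. h (s, w)) \<in> borel_measurable (K s)"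
        using measurable_Pair2[OF h s] sets_K[OF s] by (simp cong: measurable_cong_sets)
      then show "(\<integral>w. h (s, w) \<partial>K s) \<le> ln (V / \<delta>)"
        using Ks.integral_le_ln_if_nn_integral_exp_le F \<delta> by (simp add: F_def)
    qed
  qed
  finally show ?thesis .
qed

end

locale subgaussian_learning =
  fixes PZ :: "'z measure" and MW :: "'w measure"
    and K :: "(nat \<Rightarrow> 'z) \<Rightarrow> 'w measure"
    and loss :: "'w \<Rightarrow> 'z \<Rightarrow> real"
    and n :: nat and \<sigma> :: real
  assumes PZ: "prob_space PZ"
    and n: "n \<ge> 1"
    and K: "K \<in> sample_law n PZ \<rightarrow>\<^sub>M prob_algebra MW"
    and loss_meas: "(\<lambda>(w, z). loss w z) \<in> borel_measurable (MW \<Otimes>\<^sub>M PZ)"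
    and subgauss: "\<And>w t. w \<in> space MW \<Longrightarrow>
        (\<integral>\<^sup>+ z. ennreal (exp (t * (loss w z - (\<integral>z'. loss w z' \<partial>PZ)))) \<partial>PZ)
          \<le> ennreal (exp (t\<^sup>2 * \<sigma>\<^sup>2 / 2))"
begin

abbreviation "PS \<equiv> sample_law n PZ"
abbreviation "PW \<equiv> marginal_W PS K"
abbreviation "PSW \<equiv> joint_law PS MW K"

sublocale prob_kernel PS MW K
proof (rule prob_kernel.intro)
  show "prob_space PS" unfolding sample_law_def by (intro prob_space_PiM PZ)
  show "K \<in> PS \<rightarrow>\<^sub>M prob_algebra MW" by (rule K)
qed

lemma borel_measurable_gen[measurable]:
  "(\<lambda>x. gen n PZ loss (fst x) (snd x)) \<in> borel_measurable (PS \<Otimes>\<^sub>M MW)"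
proof -
  have loss[measurable]: "(\<lambda>x. loss (fst x) (snd x)) \<in> borel_measurable (MW \<Otimes>\<^sub>M PZ)"
    using loss_meas by (simp add: case_prod_beta')
  interpret PZ: prob_space PZ by (rule PZ)
  have [measurable]: "(\<lambda>w. \<integral>z. loss w z \<partial>PZ) \<in> borel_measurable MW"
    by (rule PZ.borel_measurable_lebesgue_integral) (use loss_meas in simp)
  have "(\<lambda>x. loss (snd x) (fst x i)) \<in> borel_measurable (PS \<Otimes>\<^sub>M MW)" if "i \<in> {..<n}" for i
  proof -
    have "(\<lambda>x. (snd x, fst x i)) \<in> PS \<Otimes>\<^sub>M MW \<rightarrow>\<^sub>M MW \<Otimes>\<^sub>M PZ"
      using that unfolding sample_law_def
      by (intro measurable_Pair measurable_snd measurable_compose[OF measurable_fst]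
          measurable_component_singleton)
    from measurable_compose[OF this loss] show ?thesis by simp
  qed
  then show ?thesis
    unfolding gen_def
    by (intro borel_measurable_diff borel_measurable_times borel_measurable_sum) simp_all
qed

lemma sets_PS_PW: "sets (PS \<Otimes>\<^sub>M PW) = sets (PS \<Otimes>\<^sub>M MW)"
  by (intro sets_pair_measure_cong sets_marginal_W refl)

lemma nn_integral_exp_gen_sample_le:
  assumes w: "w \<in> space MW"
  shows "(\<integral>\<^sup>+s. exp (t * gen n PZ loss s w) \<partial>PS) \<le> exp (t\<^sup>2 * \<sigma>\<^sup>2 / (2 * n))"
proof -
  have "loss w \<in> borel_measurable PZ"
    using measurable_Pair2[OF loss_meas w] by simp
  from nn_integral_exp_mean_deviation_PiM_le[OF PZ this _ subgauss[OF w]]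
  show ?thesis using n by (simp add: gen_def sample_law_def)
qed

lemma nn_integral_exp_gen_product_le:
  "(\<integral>\<^sup>+x. exp (t * gen n PZ loss (fst x) (snd x)) \<partial>(PS \<Otimes>\<^sub>M PW)) \<le> exp (t\<^sup>2 * \<sigma>\<^sup>2 / (2 * n))"
proof -
  interpret PS: prob_space PS by (rule prob_space_PS)
  interpret PW: prob_space PW by (rule prob_space_marginal_W)
  interpret pair_prob_space PS PW ..
  have "(\<integral>\<^sup>+x. exp (t * gen n PZ loss (fst x) (snd x)) \<partial>(PS \<Otimes>\<^sub>M PW))
      = (\<integral>\<^sup>+w. \<integral>\<^sup>+s. exp (t * gen n PZ loss s w) \<partial>PS \<partial>PW)"
    using nn_integral_snd[of "\<lambda>x. ennreal (exp (t * gen n PZ loss (fst x) (snd x)))"]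
    by (simp add: measurable_cong_sets[OF sets_PS_PW refl])
  also have "\<dots> \<le> (\<integral>\<^sup>+w. exp (t\<^sup>2 * \<sigma>\<^sup>2 / (2 * n)) \<partial>PW)"
    by (intro nn_integral_mono nn_integral_exp_gen_sample_le)
       (simp add: sets_eq_imp_space_eq[OF sets_marginal_W])
  also have "\<dots> = exp (t\<^sup>2 * \<sigma>\<^sup>2 / (2 * n))"
    by (simp add: PW.emeasure_space_1)
  finally show ?thesis .
qed

lemma nn_integral_exp_gen_joint_le:
  assumes ac: "absolutely_continuous (PS \<Otimes>\<^sub>M PW) PSW" and \<beta>: "\<beta> > 1"
    and fin: "H_div_finite \<beta> PSW (PS \<Otimes>\<^sub>M PW)"
  shows "(\<integral>\<^sup>+x. exp (t * gen n PZ loss (fst x) (snd x)) \<partial>PSW)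
    \<le> ((\<beta> - 1) * H_div \<beta> PSW (PS \<Otimes>\<^sub>M PW) + 1) powr (1/\<beta>) * exp (\<beta> / (\<beta> - 1) * t\<^sup>2 * \<sigma>\<^sup>2 / (2 * n))"
proof -
  let ?Q = "PS \<Otimes>\<^sub>M PW" and ?g = "\<lambda>x. gen n PZ loss (fst x) (snd x)"
  define q where "q = \<beta> / (\<beta> - 1)"
  define M where "M = (\<beta> - 1) * H_div \<beta> PSW ?Q + 1"
  define B where "B = exp ((q * t)\<^sup>2 * \<sigma>\<^sup>2 / (2 * n))"
  define \<rho> where "\<rho> = (\<lambda>x. enn2real (RN_deriv ?Q PSW x))"
  have Q: "prob_space ?Q"
    by (intro prob_space_pair prob_space_PS prob_space_marginal_W)
  have sets: "sets PSW = sets ?Q"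
    by (simp add: sets_joint_law sets_PS_PW)
  have [measurable]: "?g \<in> borel_measurable ?Q"
    by (simp add: measurable_cong_sets[OF sets_PS_PW refl])
  have [measurable]: "\<rho> \<in> borel_measurable ?Q"
    unfolding \<rho>_def by measurable
  have M: "M \<ge> 1"
    using H_div_nonneg[OF Q prob_space_joint_law sets ac \<beta> fin] \<beta> by (simp add: M_def)
  have pq: "1/\<beta> + 1/q = 1" using \<beta> by (simp add: q_def field_simps)
  have "(\<integral>\<^sup>+x. exp (t * ?g x) \<partial>PSW) = (\<integral>\<^sup>+x. RN_deriv ?Q PSW x * exp (t * ?g x) \<partial>?Q)"
    by (rule sigma_finite_measure.RN_deriv_nn_integral[OF prob_space_imp_sigma_finite[OF Q] ac sets])
       simp
  also have "\<dots> = (\<integral>\<^sup>+x. \<rho> x * exp (t * ?g x) \<partial>?Q)"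
    using AE_RN_deriv_eq_ennreal_enn2real[OF Q prob_space_joint_law sets ac]
    by (intro nn_integral_cong_AE) (auto simp: \<rho>_def ennreal_mult)
  also have "\<dots> \<le> M powr (1/\<beta>) * B powr (1/q)"
  proof (rule nn_integral_Holder_le[OF \<beta> pq])
    show "(\<integral>\<^sup>+x. \<rho> x powr \<beta> \<partial>?Q) \<le> ennreal M"
      using integral_RN_deriv_powr_eq_H_div[OF Q \<beta> fin]
      by (simp add: nn_integral_eq_integral \<rho>_def M_def)
    show "(\<integral>\<^sup>+x. exp (t * ?g x) powr q \<partial>?Q) \<le> ennreal B"
      using nn_integral_exp_gen_product_le[of "q * t"]
      by (simp add: B_def powr_def mult.assoc)
  qed (use M in \<open>auto simp: \<rho>_def B_def\<close>)
  also have "B powr (1/q) = exp (q * t\<^sup>2 * \<sigma>\<^sup>2 / (2 * n))"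
    using \<beta> by (simp add: B_def powr_def q_def power2_eq_square)
  finally show ?thesis by (simp add: M_def q_def)
qed

lemma one_le_H_div_moment_root:
  assumes ac: "absolutely_continuous (PS \<Otimes>\<^sub>M PW) PSW" and \<beta>: "\<beta> > 1"
    and fin: "H_div_finite \<beta> PSW (PS \<Otimes>\<^sub>M PW)"
  shows "1 \<le> ((\<beta> - 1) * H_div \<beta> PSW (PS \<Otimes>\<^sub>M PW) + 1) powr (1/\<beta>)"
proof -
  have "0 \<le> H_div \<beta> PSW (PS \<Otimes>\<^sub>M PW)"
    by (rule H_div_nonneg[OF _ prob_space_joint_law _ ac \<beta> fin])
       (simp_all add: prob_space_pair prob_space_PS prob_space_marginal_W sets_joint_law sets_PS_PW)
  then show ?thesis using \<beta> by (simp add: ge_one_powr_ge_zero)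
qed

lemma prob_scaled_expected_gen_le:
  assumes ac: "absolutely_continuous (PS \<Otimes>\<^sub>M PW) PSW" and \<beta>: "\<beta> > 1"
    and fin: "H_div_finite \<beta> PSW (PS \<Otimes>\<^sub>M PW)" and \<delta>: "0 < \<delta>" "\<delta> \<le> 1"
  shows "1 - \<delta> \<le> measure PS {s \<in> space PS. t * (\<integral>w. gen n PZ loss s w \<partial>K s)
    \<le> ln (((\<beta> - 1) * H_div \<beta> PSW (PS \<Otimes>\<^sub>M PW) + 1) powr (1/\<beta>) / \<delta>)
      + \<beta> / (\<beta> - 1) * t\<^sup>2 * \<sigma>\<^sup>2 / (2 * n)}"
proof -
  define a where "a = ((\<beta> - 1) * H_div \<beta> PSW (PS \<Otimes>\<^sub>M PW) + 1) powr (1/\<beta>)"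
  define e where "e = exp (\<beta> / (\<beta> - 1) * t\<^sup>2 * \<sigma>\<^sup>2 / (2 * n))"
  have "1 \<le> a" unfolding a_def by (rule one_le_H_div_moment_root[OF ac \<beta> fin])
  moreover have "1 \<le> e" using \<beta> by (simp add: e_def)
  ultimately have "1 * 1 \<le> a * e" by (intro mult_mono) auto
  with \<delta> have "\<delta> \<le> a * e" by simp
  have "1 - \<delta> \<le> measure PS {s \<in> space PS. (\<integral>w. t * gen n PZ loss s w \<partial>K s) \<le> ln (a * e / \<delta>)}"
    using prob_integral_le_ln_exp_moment[of "\<lambda>x. t * gen n PZ loss (fst x) (snd x)" "a * e" \<delta>]
      nn_integral_exp_gen_joint_le[OF ac \<beta> fin, of t] \<open>\<delta> \<le> a * e\<close> \<delta>
    by (simp add: a_def e_def)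
  also have "ln (a * e / \<delta>) = ln (a / \<delta>) + \<beta> / (\<beta> - 1) * t\<^sup>2 * \<sigma>\<^sup>2 / (2 * n)"
    using \<open>1 \<le> a\<close> \<delta> by (simp add: e_def ln_mult ln_div)
  finally show ?thesis by (simp add: a_def)
qed

lemma prob_expected_gen_le:
  assumes ac: "absolutely_continuous (PS \<Otimes>\<^sub>M PW) PSW" and \<beta>: "\<beta> > 1"
    and fin: "H_div_finite \<beta> PSW (PS \<Otimes>\<^sub>M PW)" and \<delta>: "0 < \<delta>" "\<delta> < 1"
  shows "1 - \<delta> \<le> measure PS {s \<in> space PS. (\<integral>w. gen n PZ loss s w \<partial>K s)
    \<le> sqrt (2 * \<sigma>\<^sup>2 / n) * (\<beta> / (4 * (\<beta> - 1))
      + ln (((\<beta> - 1) * H_div \<beta> PSW (PS \<Otimes>\<^sub>M PW) + 1) powr (1/\<beta>) / \<delta>))}"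
proof -
  interpret PS: prob_space PS by (rule prob_space_PS)
  define L where "L = ln (((\<beta> - 1) * H_div \<beta> PSW (PS \<Otimes>\<^sub>M PW) + 1) powr (1/\<beta>) / \<delta>)"
  define I where "I s = (\<integral>w. gen n PZ loss s w \<partial>K s)" for s
  define u where "u = sqrt (2 * \<sigma>\<^sup>2 / n)"
  have [measurable]: "I \<in> borel_measurable PS"
    unfolding I_def using borel_measurable_integral_K[OF borel_measurable_gen] by simp
  have bound: "1 - \<delta> \<le> measure PS {s \<in> space PS. t * I s \<le> L + \<beta> / (\<beta> - 1) * t\<^sup>2 * \<sigma>\<^sup>2 / (2 * n)}"
    for t using prob_scaled_expected_gen_le[OF ac \<beta> fin, of \<delta> t] \<delta> by (simp add: I_def L_def)
  show ?thesis
  proof (cases "\<sigma> = 0")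
    case True
    have "0 \<le> L"
      using one_le_H_div_moment_root[OF ac \<beta> fin] \<delta> by (simp add: L_def le_divide_eq)
    from PS.le_prob_nonpos_if_le_prob_scaled[OF _ this, of I] bound True
    show ?thesis by (simp add: I_def u_def)
  next
    case False
    then have u: "u > 0" "u\<^sup>2 = 2 * \<sigma>\<^sup>2 / n" using n by (simp_all add: u_def)
    have "(1/u)\<^sup>2 * \<sigma>\<^sup>2 / (2 * n) = \<sigma>\<^sup>2 / (2 * (n * u\<^sup>2))"
      using u n by (simp add: power_one_over field_simps)
    also have "\<dots> = 1/4"
      using u(2) n False by simp
    finally have quarter: "(1/u)\<^sup>2 * \<sigma>\<^sup>2 / (2 * n) = 1/4" .
    have "\<beta> / (\<beta> - 1) * (1/u)\<^sup>2 * \<sigma>\<^sup>2 / (2 * n) = \<beta> / (\<beta> - 1) * ((1/u)\<^sup>2 * \<sigma>\<^sup>2 / (2 * n))"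
      by (simp only: mult.assoc times_divide_eq_right)
    also have "\<dots> = \<beta> / (4 * (\<beta> - 1))"
      unfolding quarter by simp
    finally have "\<beta> / (\<beta> - 1) * (1/u)\<^sup>2 * \<sigma>\<^sup>2 / (2 * n) = \<beta> / (4 * (\<beta> - 1))" .
    moreover have "(1/u) * I s \<le> L + \<beta> / (4 * (\<beta> - 1)) \<longleftrightarrow> I s \<le> u * (\<beta> / (4 * (\<beta> - 1)) + L)" for s
      using u by (simp add: field_simps)
    ultimately show ?thesis
      using bound[of "1/u"] by (simp add: I_def u_def L_def add.commute)
  qed
qed

end

theorem corollary3:
  fixes PZ :: "'z measure" and MW :: "'w measure"
    and K :: "(nat \<Rightarrow> 'z) \<Rightarrow> 'w measure"
    and loss :: "'w \<Rightarrow> 'z \<Rightarrow> real"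
    and n :: nat and \<sigma> \<beta> \<delta> :: real
  assumes PZ: "prob_space PZ"
    and n: "n \<ge> 1"
    and K: "K \<in> sample_law n PZ \<rightarrow>\<^sub>M prob_algebra MW"
    and loss_meas: "(\<lambda>(w, z). loss w z) \<in> borel_measurable (MW \<Otimes>\<^sub>M PZ)"
    and subgauss: "\<And>w t. w \<in> space MW \<Longrightarrow>
        (\<integral>\<^sup>+ z. ennreal (exp (t * (loss w z - (\<integral>z'. loss w z' \<partial>PZ)))) \<partial>PZ)
          \<le> ennreal (exp (t\<^sup>2 * \<sigma>\<^sup>2 / 2))"
    and \<beta>: "\<beta> > 1"
    and ac: "absolutely_continuous (sample_law n PZ \<Otimes>\<^sub>M marginal_W (sample_law n PZ) K)
                (joint_law (sample_law n PZ) MW K)"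
    and Hfin: "H_div_finite \<beta> (joint_law (sample_law n PZ) MW K)
                (sample_law n PZ \<Otimes>\<^sub>M marginal_W (sample_law n PZ) K)"
    and \<delta>: "0 < \<delta>" "\<delta> < 1"
  shows "measure (sample_law n PZ)
     {s \<in> space (sample_law n PZ).
        (\<integral>w. gen n PZ loss s w \<partial>(K s))
        \<le> sqrt (2 * \<sigma>\<^sup>2 / real n) *
           (ln (sqrt (pi * \<beta> / (\<beta> - 1))) + \<beta> / (4 * (\<beta> - 1))
            + ln ((((\<beta> - 1) * H_div \<beta> (joint_law (sample_law n PZ) MW K)
                      (sample_law n PZ \<Otimes>\<^sub>M marginal_W (sample_law n PZ) K) + 1) powr (1 / \<beta>)) / \<delta>))}
     \<ge> 1 - \<delta>"
proof -
  interpret subgaussian_learning PZ MW K loss n \<sigma>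
    using PZ n K loss_meas subgauss by (rule subgaussian_learning.intro)
  interpret PS: prob_space PS by (rule prob_space_PS)
  have "\<beta> \<le> pi * \<beta>" using \<beta> pi_gt3 by (simp add: mult_le_cancel_right1)
  then have "\<beta> - 1 \<le> pi * \<beta>" by linarith
  then have "1 \<le> pi * \<beta> / (\<beta> - 1)"
    by (rule le_divide_eq_1_pos[THEN iffD2, rotated]) (use \<beta> in simp)
  then have c0: "0 \<le> ln (sqrt (pi * \<beta> / (\<beta> - 1)))" by simp
  have weaken: "x \<le> sqrt (2 * \<sigma>\<^sup>2 / n) * (ln (sqrt (pi * \<beta> / (\<beta> - 1))) + c + L)"
    if "x \<le> sqrt (2 * \<sigma>\<^sup>2 / n) * (c + L)" for x c L
  proof -
    have "sqrt (2 * \<sigma>\<^sup>2 / n) * (c + L)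
        \<le> sqrt (2 * \<sigma>\<^sup>2 / n) * (ln (sqrt (pi * \<beta> / (\<beta> - 1))) + c + L)"
      using c0 by (intro mult_left_mono) auto
    with that show ?thesis by linarith
  qed
  have [measurable]: "(\<lambda>s. \<integral>w. gen n PZ loss s w \<partial>K s) \<in> borel_measurable PS"
    using borel_measurable_integral_K[OF borel_measurable_gen] by simp
  show ?thesis
    by (rule order_trans[OF prob_expected_gen_le[OF ac \<beta> Hfin \<delta>] PS.finite_measure_mono])
       (use weaken in auto)
qed

end
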